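(* Let $\mathcal{C}$ be a systematic $[n,k,d]$ linear code over $\mathbb{F}_q$ which is an $(r,\delta)_i$ code, with $r\mid k$, $d<r+2\delta-1$, and $$d = n-k+1-\left(\left\lceil \tfrac{k}{r}\right\rceil-1\right)(\delta-1).$$ Then the generalized Hamming weights of the dual code satisfy $d^\perp_i = r+i$ for $1\le i\le \delta-1$.
   Context: For a linear code $\mathcal{D}$, its $j$-th generalized Hamming weight is the minimum size of the support $\bigcup_{\mathbf{c}\in\mathcal{E}}\{l: c_l\ne 0\}$ over all $j$-dimensional subcodes $\mathcal{E}$ of $\mathcal{D}$; $d^\perp_j$ denotes that of the dual code $\mathcal{C}^\perp$. Coordinate $i$ has locality $(r,\delta)$ if there is $S_i\ni i$ with $|S_i|\le r+\delta-1$ such that the punctured code $\mathcal{C}|_{S_i}$ has minimum distance at least $\delta$. An $(r,\delta)_i$ code is a systematic linear code (information symbols in the first $k$ coordinates) in which all $k$ information coordinates have locality $(r,\delta)$. *)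

theory Defs
  imports Complex_Main "HOL-Library.Function_Algebras"
begin

text \<open>Words of length n over a finite field 'a are functions nat => 'a vanishing
  outside the coordinate set {0..<n}; coordinates are 0-based, so the
  information coordinates of a systematic code are {0..<k}.\<close>

definition fscale :: "'a::field \<Rightarrow> (nat \<Rightarrow> 'a) \<Rightarrow> (nat \<Rightarrow> 'a)" where
  "fscale c v = (\<lambda>i. c * v i)"

lemma vector_space_fscale: "vector_space (fscale :: 'a::field \<Rightarrow> _)"
  by unfold_locales (auto simp: fscale_def fun_eq_iff algebra_simps)

definition words :: "nat \<Rightarrow> (nat \<Rightarrow> 'a::zero) set" where
  "words n = {v. \<forall>i\<ge>n. v i = 0}"

definition lin_code :: "nat \<Rightarrow> (nat \<Rightarrow> 'a::field) set \<Rightarrow> bool" where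
  "lin_code n C \<longleftrightarrow> C \<subseteq> words n \<and> module.subspace fscale C"

definition code_dim :: "(nat \<Rightarrow> 'a::field) set \<Rightarrow> nat" where
  "code_dim C = vector_space.dim fscale C"

definition wt_supp :: "(nat \<Rightarrow> 'a::zero) \<Rightarrow> nat set" where
  "wt_supp c = {l. c l \<noteq> 0}"

definition min_dist :: "(nat \<Rightarrow> 'a::zero) set \<Rightarrow> nat" where
  "min_dist C = Min {card (wt_supp c) | c. c \<in> C \<and> c \<noteq> 0}"

definition code_supp :: "(nat \<Rightarrow> 'a::zero) set \<Rightarrow> nat set" where
  "code_supp E = (\<Union>c\<in>E. wt_supp c)"

definition ghw :: "(nat \<Rightarrow> 'a::field) set \<Rightarrow> nat \<Rightarrow> nat" where
  "ghw D j = Min {card (code_supp E) | E. E \<subseteq> D \<and> module.subspace fscale E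
                                          \<and> vector_space.dim fscale E = j}"

definition dual_code :: "nat \<Rightarrow> (nat \<Rightarrow> 'a::field) set \<Rightarrow> (nat \<Rightarrow> 'a) set" where
  "dual_code n C = {v \<in> words n. \<forall>c\<in>C. (\<Sum>i<n. v i * c i) = 0}"

definition puncture :: "(nat \<Rightarrow> 'a::zero) set \<Rightarrow> nat set \<Rightarrow> (nat \<Rightarrow> 'a) set" where
  "puncture C S = (\<lambda>c. (\<lambda>l. if l \<in> S then c l else 0)) ` C"

text \<open>Minimum distance of C|_S is at least \<delta> (vacuous if C|_S = {0},
  following the convention that the zero code has infinite minimum distance).\<close>
definition min_dist_ge :: "(nat \<Rightarrow> 'a::zero) set \<Rightarrow> nat \<Rightarrow> bool" where
  "min_dist_ge C \<delta> \<longleftrightarrow> (\<forall>c\<in>C. c \<noteq> 0 \<longrightarrow> card (wt_supp c) \<ge> \<delta>)"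

definition has_locality ::
  "nat \<Rightarrow> (nat \<Rightarrow> 'a::zero) set \<Rightarrow> nat \<Rightarrow> nat \<Rightarrow> nat \<Rightarrow> bool" where
  "has_locality n C r \<delta> i \<longleftrightarrow>
     (\<exists>S. S \<subseteq> {..<n} \<and> i \<in> S \<and> card S \<le> r + \<delta> - 1 \<and> min_dist_ge (puncture C S) \<delta>)"

definition systematic :: "nat \<Rightarrow> (nat \<Rightarrow> 'a::zero) set \<Rightarrow> bool" where
  "systematic k C \<longleftrightarrow> (\<forall>u\<in>words k. \<exists>!c. c \<in> C \<and> (\<forall>i<k. c i = u i))"

definition rdelta_i_code ::
  "nat \<Rightarrow> nat \<Rightarrow> nat \<Rightarrow> nat \<Rightarrow> (nat \<Rightarrow> 'a::field) set \<Rightarrow> bool" where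
  "rdelta_i_code n k r \<delta> C \<longleftrightarrow> lin_code n C \<and> code_dim C = k \<and> systematic k C
      \<and> (\<forall>i<k. has_locality n C r \<delta> i)"

end

theory Submission
  imports Defs
begin

text \<open>
  Let v be a nonzero dual codeword with support T. Since v is a linear relation on T,
  the subcode vanishing on T has dimension at least k + 1 - |T|. Shortening further along the
  repair group of an information coordinate on which the current subcode is nonzero costs at most
  r dimensions, while \<delta> - 1 of the new coordinates come for free. If |T| \<le> r, the dimension
  stays positive through k/r - 1 such steps, and shortening on dim - 1 further coordinates then
  yields a nonzero codeword of weight at most n - k - (k/r - 1)(\<delta> - 1) = d - 1. So nonzero
  dual codewords have weight at least r + 1, and removing support coordinates one at a time
  gives the i-th generalized weight at least r + i.

  On a repair group S, any |S| - (\<delta> - 1) coordinates determine the others, so each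
  of the remaining \<delta> - 1 coordinates gives a dual codeword supported on S minus the other ones;
  i of them span an i-dimensional subcode of the dual supported on at most r + i coordinates.
\<close>

interpretation vs: vector_space "fscale :: 'a::field \<Rightarrow> (nat \<Rightarrow> 'a) \<Rightarrow> (nat \<Rightarrow> 'a)"
  by (rule vector_space_fscale)

interpretation vs_pair: vector_space_pair
  "fscale :: 'a::field \<Rightarrow> (nat \<Rightarrow> 'a) \<Rightarrow> (nat \<Rightarrow> 'a)" "fscale :: 'a \<Rightarrow> (nat \<Rightarrow> 'a) \<Rightarrow> (nat \<Rightarrow> 'a)"
  by (intro vector_space_pair.intro vector_space_fscale)

lemma fscale_apply: "fscale c v i = c * v i"
  by (simp add: fscale_def)

lemma sum_fun_apply: "(\<Sum>z\<in>A. f z) i = (\<Sum>z\<in>A. (f z i :: 'b::comm_monoid_add))"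
  by (induction A rule: infinite_finite_induct) auto

lemma finite_words: "finite (words n :: (nat \<Rightarrow> 'a::{finite,zero}) set)"
proof -
  have "words n = {f :: nat \<Rightarrow> 'a. \<forall>x. (x \<in> {..<n} \<longrightarrow> f x \<in> UNIV) \<and> (x \<notin> {..<n} \<longrightarrow> f x = 0)}"
    by (auto simp: words_def)
  then show ?thesis
    using finite_set_of_finite_funs[of "{..<n}" "UNIV :: 'a set" 0] by simp
qed

lemma words_nonzero_lt: "v \<in> words n \<Longrightarrow> v x \<noteq> 0 \<Longrightarrow> x < n"
  by (auto simp: words_def) (meson not_le)

lemma wt_supp_subset_words: "v \<in> words n \<Longrightarrow> wt_supp v \<subseteq> {..<n}"
  by (auto simp: wt_supp_def words_nonzero_lt)

lemma code_supp_subset_words: "E \<subseteq> words n \<Longrightarrow> code_supp E \<subseteq> {..<n}"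
  by (auto simp: code_supp_def dest!: wt_supp_subset_words)

lemma code_supp_subset_iff: "code_supp E \<subseteq> Z \<longleftrightarrow> (\<forall>w\<in>E. \<forall>x. x \<notin> Z \<longrightarrow> w x = 0)"
  by (auto simp: code_supp_def wt_supp_def)

lemma subspace_vanishing_outside: "vs.subspace {w :: nat \<Rightarrow> 'a::field. \<forall>x. x \<notin> Z \<longrightarrow> w x = 0}"
  by (rule vs.subspaceI) (auto simp: fscale_apply)

lemma code_supp_span_subset:
  assumes "\<forall>w\<in>B. \<forall>x. x \<notin> Z \<longrightarrow> w x = (0::'a::field)"
  shows "code_supp (vs.span B) \<subseteq> Z"
proof -
  have "vs.span B \<subseteq> {w. \<forall>x. x \<notin> Z \<longrightarrow> w x = 0}"
    using assms by (intro vs.span_minimal subspace_vanishing_outside) auto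
  then show ?thesis
    unfolding code_supp_subset_iff by blast
qed

lemma dim_le_dim_of_subset_span:
  fixes S T :: "(nat \<Rightarrow> 'a::field) set"
  assumes "S \<subseteq> vs.span T" "finite T"
  shows "vs.dim S \<le> vs.dim T"
proof -
  obtain B where B: "B \<subseteq> T" "vs.independent B" "T \<subseteq> vs.span B" "card B = vs.dim T"
    by (rule vs.basis_exists)
  have "S \<subseteq> vs.span B"
    using assms(1) B(3) vs.span_mono vs.span_span by (metis order_trans)
  then show ?thesis
    using vs.dim_le_card B(1,4) assms(2) finite_subset by metis
qed

lemma dim_insert_le:
  fixes S :: "(nat \<Rightarrow> 'a::field) set"
  assumes "finite S"
  shows "vs.dim (insert a S) \<le> vs.dim S + 1"
proof -
  obtain B where B: "B \<subseteq> S" "vs.independent B" "S \<subseteq> vs.span B" "card B = vs.dim S"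
    by (rule vs.basis_exists)
  have finB: "finite B"
    using B(1) assms finite_subset by blast
  have "insert a S \<subseteq> vs.span (insert a B)"
    using B(3) vs.span_mono[of B "insert a B"] vs.span_superset[of "insert a B"] by blast
  then have "vs.dim (insert a S) \<le> card (insert a B)"
    using vs.dim_le_card finB by blast
  also have "\<dots> \<le> card B + 1"
    using finB by (simp add: card_insert_if)
  finally show ?thesis
    using B(4) by simp
qed

lemma ex_nonzero_if_dim_pos:
  fixes S :: "(nat \<Rightarrow> 'a::field) set"
  assumes "1 \<le> vs.dim S"
  obtains x where "x \<in> S" "x \<noteq> 0"
proof -
  have "\<not> S \<subseteq> vs.span {}"
    using assms vs.dim_le_card[of S "{}"] by auto
  then show ?thesis
    using that by auto
qed

lemma dim_le_dim_coord_kernel: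
  fixes E :: "(nat \<Rightarrow> 'a::field) set"
  assumes "finite E" "vs.subspace E"
  shows "vs.dim E \<le> vs.dim {w\<in>E. w l = 0} + 1"
proof (cases "\<exists>v\<in>E. v l \<noteq> 0")
  case True
  then obtain v where v: "v \<in> E" "v l \<noteq> 0"
    by blast
  let ?E' = "{w\<in>E. w l = 0}"
  have "E \<subseteq> vs.span (insert v ?E')"
  proof
    fix w assume w: "w \<in> E"
    define a where "a = w l / v l"
    have "w - fscale a v \<in> ?E'"
      using assms(2) v w by (auto simp: a_def fscale_apply intro: vs.subspace_diff vs.subspace_scale)
    then have "(w - fscale a v) + fscale a v \<in> vs.span (insert v ?E')"
      by (intro vs.span_add vs.span_scale vs.span_base) auto
    then show "w \<in> vs.span (insert v ?E')"
      by simp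
  qed
  then have "vs.dim E \<le> vs.dim (insert v ?E')"
    using assms(1) by (intro dim_le_dim_of_subset_span) auto
  also have "\<dots> \<le> vs.dim ?E' + 1"
    using assms(1) by (intro dim_insert_le) simp
  finally show ?thesis .
next
  case False
  then have "{w\<in>E. w l = 0} = E"
    by auto
  then show ?thesis
    by simp
qed

definition unitv :: "nat \<Rightarrow> nat \<Rightarrow> 'a::{zero,one}" where
  "unitv z = (\<lambda>i. if i = z then 1 else 0)"

lemma sum_unitv_eq:
  fixes v :: "nat \<Rightarrow> 'a::field"
  assumes "finite Z" "\<forall>i. i \<notin> Z \<longrightarrow> v i = 0"
  shows "(\<Sum>z\<in>Z. fscale (v z) (unitv z)) = v"
proof
  fix i
  have "(\<Sum>z\<in>Z. fscale (v z) (unitv z)) i = (\<Sum>z\<in>Z. if z = i then v z else 0)"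
    unfolding sum_fun_apply by (intro sum.cong) (auto simp: unitv_def fscale_apply)
  also have "\<dots> = v i"
    using assms by auto
  finally show "(\<Sum>z\<in>Z. fscale (v z) (unitv z)) i = v i" .
qed

lemma dim_le_card_support:
  fixes S :: "(nat \<Rightarrow> 'a::field) set"
  assumes "finite Z" "\<forall>v\<in>S. \<forall>i. i \<notin> Z \<longrightarrow> v i = 0"
  shows "vs.dim S \<le> card Z"
proof -
  have "S \<subseteq> vs.span (unitv ` Z)"
  proof
    fix v assume "v \<in> S"
    then have "v = (\<Sum>z\<in>Z. fscale (v z) (unitv z))"
      using assms by (simp add: sum_unitv_eq)
    also have "\<dots> \<in> vs.span (unitv ` Z)"
      by (intro vs.span_sum vs.span_scale vs.span_base) simp
    finally show "v \<in> vs.span (unitv ` Z)" .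
  qed
  then have "vs.dim S \<le> card (unitv ` Z :: (nat \<Rightarrow> 'a) set)"
    using assms(1) by (intro vs.dim_le_card) auto
  also have "\<dots> \<le> card Z"
    using assms(1) by (rule card_image_le)
  finally show ?thesis .
qed

lemma dim_span_unit_family:
  fixes f :: "nat \<Rightarrow> nat \<Rightarrow> 'a::field"
  assumes unit: "\<And>l l'. l \<in> L \<Longrightarrow> l' \<in> L \<Longrightarrow> f l l' = (if l' = l then 1 else 0)"
  shows "vs.dim (vs.span (f ` L)) = card L"
proof -
  have inj: "inj_on f L"
  proof (rule inj_onI)
    fix a b assume "a \<in> L" "b \<in> L" "f a = f b"
    then have "f b a = 1"
      using unit[of a a] by simp
    then show "a = b"
      using unit[of b a] \<open>a \<in> L\<close> \<open>b \<in> L\<close> by (simp split: if_splits)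
  qed
  have "vs.independent (f ` L)"
  proof
    assume "vs.dependent (f ` L)"
    then obtain l where l: "l \<in> L" "f l \<in> vs.span (f ` L - {f l})"
      unfolding vs.dependent_def by blast
    have "\<forall>w\<in>f ` L - {f l}. \<forall>x. x \<notin> - {l} \<longrightarrow> w x = 0"
      using l(1) unit by (auto split: if_split_asm)
    then have "code_supp (vs.span (f ` L - {f l})) \<subseteq> - {l}"
      by (rule code_supp_span_subset)
    then have "f l l = 0"
      using l(2) by (auto simp: code_supp_def wt_supp_def)
    then show False
      using unit l(1) by simp
  qed
  then have "vs.dim (f ` L) = card (f ` L)"
    by (rule vs.dim_eq_card_independent)
  then show ?thesis
    using card_image[OF inj] by simp
qed

text \<open>Shortened code: the coordinates in X are kept, as zeros, rather than deleted.\<close>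

definition shortened :: "(nat \<Rightarrow> 'a::zero) set \<Rightarrow> nat set \<Rightarrow> (nat \<Rightarrow> 'a) set" where
  "shortened C X = {c\<in>C. \<forall>l\<in>X. c l = 0}"

lemma shortened_empty [simp]: "shortened C {} = C"
  by (simp add: shortened_def)

lemma shortened_subset: "shortened C X \<subseteq> C"
  by (auto simp: shortened_def)

lemma shortened_antimono: "X \<subseteq> Y \<Longrightarrow> shortened C Y \<subseteq> shortened C X"
  by (auto simp: shortened_def)

lemma shortened_insert: "shortened C (insert l X) = {c\<in>shortened C X. c l = 0}"
  by (auto simp: shortened_def)

lemma subspace_shortened:
  assumes "vs.subspace C"
  shows "vs.subspace (shortened C (X :: nat set) :: (nat \<Rightarrow> 'a::field) set)"
proof (rule vs.subspaceI)
  show "0 \<in> shortened C X"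
    using vs.subspace_0[OF assms] by (simp add: shortened_def)
  show "x + y \<in> shortened C X" if "x \<in> shortened C X" "y \<in> shortened C X" for x y
    using that vs.subspace_add[OF assms] by (auto simp: shortened_def)
  show "fscale c x \<in> shortened C X" if "x \<in> shortened C X" for c x
    using that vs.subspace_scale[OF assms] by (auto simp: shortened_def fscale_apply)
qed

lemma dim_shortened_union_le:
  fixes C :: "(nat \<Rightarrow> 'a::field) set"
  assumes "finite C" "vs.subspace C" "finite U"
  shows "vs.dim (shortened C X) \<le> vs.dim (shortened C (X \<union> U)) + card U"
  using assms(3)
proof (induction U rule: finite_induct)
  case (insert l U)
  have "finite (shortened C (X \<union> U))"
    using assms(1) shortened_subset by (rule finite_subset[rotated])
  then have "vs.dim (shortened C (X \<union> U)) \<le> vs.dim (shortened C (insert l (X \<union> U))) + 1"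
    unfolding shortened_insert using assms(2) by (intro dim_le_dim_coord_kernel subspace_shortened)
  then show ?case
    using insert by simp
qed simp

lemma min_dist_le:
  assumes "finite C" "c \<in> C" "c \<noteq> 0"
  shows "min_dist C \<le> card (wt_supp c)"
  unfolding min_dist_def using assms by (intro Min_le) auto

text \<open>A Singleton-type bound for the shortened code: a nonzero codeword can be forced to vanish
  on dim - 1 further coordinates outside X.\<close>

lemma shortened_low_weight:
  fixes C :: "(nat \<Rightarrow> 'a::field) set"
  assumes C: "C \<subseteq> words n" "finite C" "vs.subspace C"
    and X: "X \<subseteq> {..<n}" and dim: "1 \<le> vs.dim (shortened C X)"
  obtains c where "c \<in> C" "c \<noteq> 0" "card (wt_supp c) + card X + vs.dim (shortened C X) \<le> n + 1"
proof -
  let ?m = "vs.dim (shortened C X)"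
  have finX: "finite X"
    using X finite_subset by blast
  have "?m \<le> card ({..<n} - X)"
    using C(1) by (intro dim_le_card_support)
      (auto simp: shortened_def dest: subsetD words_nonzero_lt)
  then obtain Z where Z: "Z \<subseteq> {..<n} - X" "card Z = ?m - 1"
    by (meson obtain_subset_with_card_n diff_le_self order_trans)
  have finZ: "finite Z"
    using Z(1) finite_subset by blast
  have "?m \<le> vs.dim (shortened C (X \<union> Z)) + card Z"
    using C(2,3) finZ by (rule dim_shortened_union_le)
  then have "1 \<le> vs.dim (shortened C (X \<union> Z))"
    using Z(2) dim by linarith
  then obtain c where c: "c \<in> shortened C (X \<union> Z)" "c \<noteq> 0"
    by (rule ex_nonzero_if_dim_pos)
  have cardXZ: "card (X \<union> Z) = card X + card Z"
    using Z(1) finX finZ by (subst card_Un_disjoint) auto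
  have "wt_supp c \<subseteq> {..<n} - (X \<union> Z)"
    using c(1) C(1) by (auto simp: shortened_def wt_supp_def dest: words_nonzero_lt)
  then have "card (wt_supp c) \<le> card ({..<n} - (X \<union> Z))"
    by (intro card_mono) auto
  also have "\<dots> = n - (card X + card Z)"
    using X Z(1) by (subst card_Diff_subset) (auto simp: finX finZ cardXZ)
  finally have "card (wt_supp c) \<le> n - (card X + card Z)" .
  moreover have "card X + card Z \<le> n"
    using card_mono[of "{..<n}" "X \<union> Z"] X Z(1) cardXZ by auto
  ultimately have "card (wt_supp c) + card X + card Z \<le> n"
    by linarith
  then show ?thesis
    using that c(2) shortened_subset[of C "X \<union> Z"] c(1) Z(2) dim by auto
qed

lemma subspace_dual_code: "vs.subspace (dual_code n C :: (nat \<Rightarrow> 'a::field) set)"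
proof (rule vs.subspaceI)
  show "0 \<in> dual_code n C"
    by (simp add: dual_code_def words_def)
  show "x + y \<in> dual_code n C" if "x \<in> dual_code n C" "y \<in> dual_code n C" for x y
  proof -
    have "(\<Sum>i<n. (x + y) i * c i) = (\<Sum>i<n. x i * c i) + (\<Sum>i<n. y i * c i)" for c
      by (simp add: distrib_right sum.distrib)
    then show ?thesis
      using that by (auto simp: dual_code_def words_def)
  qed
  show "fscale a x \<in> dual_code n C" if "x \<in> dual_code n C" for a x
  proof -
    have "(\<Sum>i<n. fscale a x i * c i) = a * (\<Sum>i<n. x i * c i)" for c
      by (simp add: fscale_apply sum_distrib_left mult.assoc)
    then show ?thesis
      using that by (auto simp: dual_code_def words_def fscale_apply)
  qed
qed

lemma dual_code_subset_words: "dual_code n C \<subseteq> words n"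
  by (auto simp: dual_code_def)

text \<open>A dual codeword v is a linear relation among the coordinates in its support, so a codeword
  vanishing on all but one of them vanishes on all.\<close>

lemma shortened_dual_support:
  assumes v: "v \<in> dual_code n C" and l: "v l \<noteq> 0"
  shows "shortened C (wt_supp v - {l}) = shortened C (wt_supp v)"
proof
  show "shortened C (wt_supp v) \<subseteq> shortened C (wt_supp v - {l})"
    by (rule shortened_antimono) auto
  show "shortened C (wt_supp v - {l}) \<subseteq> shortened C (wt_supp v)"
  proof
    fix c assume c: "c \<in> shortened C (wt_supp v - {l})"
    have "v \<in> words n" and orth: "(\<Sum>i<n. v i * c i) = 0"
      using v c by (auto simp: dual_code_def shortened_def)
    then have "l < n"
      using l words_nonzero_lt by blast
    have "(\<Sum>i\<in>{..<n} - {l}. v i * c i) = 0"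
      using c by (intro sum.neutral) (auto simp: shortened_def wt_supp_def)
    moreover have "(\<Sum>i<n. v i * c i) = v l * c l + (\<Sum>i\<in>{..<n} - {l}. v i * c i)"
      using \<open>l < n\<close> by (subst sum.remove) auto
    ultimately have "v l * c l = 0"
      using orth by simp
    then show "c \<in> shortened C (wt_supp v)"
      using c l by (auto simp: shortened_def)
  qed
qed

lemma dim_shortened_dual_support:
  fixes C :: "(nat \<Rightarrow> 'a::field) set"
  assumes C: "finite C" "vs.subspace C" and v: "v \<in> dual_code n C" "v \<noteq> 0"
  shows "vs.dim C + 1 \<le> vs.dim (shortened C (wt_supp v)) + card (wt_supp v)"
proof -
  obtain l where l: "v l \<noteq> 0"
    using v(2) by (auto simp: fun_eq_iff)
  have "wt_supp v \<subseteq> {..<n}"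
    using v(1) dual_code_subset_words by (intro wt_supp_subset_words) blast
  then have fin: "finite (wt_supp v)"
    by (rule finite_subset) simp
  have lv: "l \<in> wt_supp v"
    using l by (simp add: wt_supp_def)
  have "vs.dim (shortened C {}) \<le> vs.dim (shortened C ({} \<union> (wt_supp v - {l}))) + card (wt_supp v - {l})"
    using C fin by (intro dim_shortened_union_le) auto
  also have "shortened C ({} \<union> (wt_supp v - {l})) = shortened C (wt_supp v)"
    using shortened_dual_support[OF v(1) l] by simp
  also have "card (wt_supp v - {l}) = card (wt_supp v) - 1"
    using lv fin by simp
  finally have "vs.dim C \<le> vs.dim (shortened C (wt_supp v)) + (card (wt_supp v) - 1)"
    by simp
  moreover have "card (wt_supp v) \<noteq> 0"
    using lv fin by auto
  ultimately show ?thesis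
    by linarith
qed

text \<open>The coordinate l is a function of the restriction to A, linear on the restrictions of
  codewords; a linear right inverse of the restriction map extends it to all words.\<close>

lemma determined_coord_linear_combination:
  fixes C :: "(nat \<Rightarrow> 'a::field) set"
  assumes C: "vs.subspace C" and A: "finite A"
    and determined: "\<And>c. c \<in> C \<Longrightarrow> \<forall>i\<in>A. c i = 0 \<Longrightarrow> c l = 0"
  shows "\<exists>a. \<forall>c\<in>C. c l = (\<Sum>i\<in>A. a i * c i)"
proof -
  define \<rho> :: "(nat \<Rightarrow> 'a) \<Rightarrow> (nat \<Rightarrow> 'a)" where "\<rho> c = (\<lambda>i. if i \<in> A then c i else 0)" for c
  have "Vector_Spaces.linear fscale fscale \<rho>"
    by (auto simp: Vector_Spaces.linear_iff vector_space_fscale \<rho>_def fscale_apply fun_eq_iff)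
  then obtain \<sigma> where \<sigma>: "\<sigma> ` UNIV \<subseteq> C" "Vector_Spaces.linear fscale fscale \<sigma>"
    and right_inverse: "\<forall>u\<in>\<rho> ` C. \<rho> (\<sigma> u) = u"
    using vs_pair.linear_exists_right_inverse_on[OF _ C] by blast
  have "c l = (\<Sum>i\<in>A. \<sigma> (unitv i) l * c i)" if c: "c \<in> C" for c
  proof -
    have "c - \<sigma> (\<rho> c) \<in> C"
      using c \<sigma>(1) C by (blast intro: vs.subspace_diff)
    moreover have "\<forall>i\<in>A. (c - \<sigma> (\<rho> c)) i = 0"
    proof
      fix i assume "i \<in> A"
      have "\<rho> (\<sigma> (\<rho> c)) i = \<rho> c i"
        using right_inverse c by simp
      then show "(c - \<sigma> (\<rho> c)) i = 0"
        using \<open>i \<in> A\<close> by (simp add: \<rho>_def)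
    qed
    ultimately have "(c - \<sigma> (\<rho> c)) l = 0"
      by (rule determined)
    then have "c l = \<sigma> (\<rho> c) l"
      by simp
    also have "\<rho> c = (\<Sum>i\<in>A. fscale (c i) (unitv i))"
      using sum_unitv_eq[OF A, of "\<rho> c"] by (simp add: \<rho>_def cong: sum.cong)
    also have "\<sigma> \<dots> = (\<Sum>i\<in>A. fscale (c i) (\<sigma> (unitv i)))"
      using \<sigma>(2) by (simp add: vs_pair.linear_sum vs_pair.linear_scale)
    finally show ?thesis
      by (simp add: sum_fun_apply fscale_apply mult_ac)
  qed
  then show ?thesis
    by (intro exI[of _ "\<lambda>i. \<sigma> (unitv i) l"] ballI) simp
qed

lemma dual_codeword_of_determined_coord:
  fixes C :: "(nat \<Rightarrow> 'a::field) set"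
  assumes C: "vs.subspace C" and A: "A \<subseteq> {..<n}" and l: "l < n" "l \<notin> A"
    and determined: "\<And>c. c \<in> C \<Longrightarrow> \<forall>i\<in>A. c i = 0 \<Longrightarrow> c l = 0"
  obtains w where "w \<in> dual_code n C" "w l = 1" "\<forall>x. x \<notin> insert l A \<longrightarrow> w x = 0"
proof -
  have finA: "finite A"
    using A finite_subset by blast
  obtain a where a: "\<forall>c\<in>C. c l = (\<Sum>i\<in>A. a i * c i)"
    using determined_coord_linear_combination[OF C finA, of l] determined by blast
  define w where "w x = (if x \<in> A then - a x else if x = l then 1 else 0)" for x
  have "w \<in> dual_code n C"
    unfolding dual_code_def
  proof (intro CollectI conjI ballI)
    show "w \<in> words n"
      using A l by (auto simp: w_def words_def)
    fix c assume "c \<in> C"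
    have "(\<Sum>i<n. w i * c i) = (\<Sum>i\<in>insert l A. w i * c i)"
      using A l by (intro sum.mono_neutral_right) (auto simp: w_def)
    also have "\<dots> = c l - (\<Sum>i\<in>A. a i * c i)"
      using l finA by (simp add: w_def sum_negf cong: sum.cong)
    finally show "(\<Sum>i<n. w i * c i) = 0"
      using a \<open>c \<in> C\<close> by simp
  qed
  moreover have "w l = 1" "\<forall>x. x \<notin> insert l A \<longrightarrow> w x = 0"
    using l by (auto simp: w_def)
  ultimately show ?thesis
    using that by blast
qed

lemma dual_subcode_of_determined_coords:
  fixes C :: "(nat \<Rightarrow> 'a::field) set"
  assumes C: "vs.subspace C" and S: "S \<subseteq> {..<n}" and L: "L \<subseteq> V" and V: "V \<subseteq> S"
    and determined: "\<And>c. c \<in> C \<Longrightarrow> \<forall>x\<in>S - V. c x = 0 \<Longrightarrow> \<forall>x\<in>S. c x = 0"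
  obtains E where "E \<subseteq> dual_code n C" "vs.subspace E" "vs.dim E = card L"
    "code_supp E \<subseteq> (S - V) \<union> L"
proof -
  have "\<forall>l\<in>L. \<exists>w. w \<in> dual_code n C \<and> w l = 1 \<and> (\<forall>x. x \<notin> insert l (S - V) \<longrightarrow> w x = 0)"
  proof
    fix l assume "l \<in> L"
    then have "l < n" "l \<notin> S - V"
      using S L V by auto
    moreover have "c l = 0" if "c \<in> C" "\<forall>x\<in>S - V. c x = 0" for c
      using determined[OF that] \<open>l \<in> L\<close> L V by auto
    moreover have "S - V \<subseteq> {..<n}"
      using S by auto
    ultimately obtain w where "w \<in> dual_code n C" "w l = 1" "\<forall>x. x \<notin> insert l (S - V) \<longrightarrow> w x = 0"
      using dual_codeword_of_determined_coord[OF C] by metis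
    then show "\<exists>w. w \<in> dual_code n C \<and> w l = 1 \<and> (\<forall>x. x \<notin> insert l (S - V) \<longrightarrow> w x = 0)"
      by blast
  qed
  then obtain f where "\<forall>l\<in>L. f l \<in> dual_code n C \<and> f l l = 1 \<and> (\<forall>x. x \<notin> insert l (S - V) \<longrightarrow> f l x = 0)"
    by (rule bchoice[THEN exE])
  then have f: "\<And>l. l \<in> L \<Longrightarrow> f l \<in> dual_code n C"
    "\<And>l. l \<in> L \<Longrightarrow> f l l = 1" "\<And>l x. l \<in> L \<Longrightarrow> x \<notin> insert l (S - V) \<Longrightarrow> f l x = 0"
    by blast+
  have "f l l' = (if l' = l then 1 else 0)" if "l \<in> L" "l' \<in> L" for l l'
  proof (cases "l' = l")
    case True
    then show ?thesis
      using f(2) that(1) by simp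
  next
    case False
    then have "l' \<notin> insert l (S - V)"
      using that(2) L by auto
    then show ?thesis
      using f(3) that(1) False by simp
  qed
  then have "vs.dim (vs.span (f ` L)) = card L"
    by (rule dim_span_unit_family)
  moreover have "vs.span (f ` L) \<subseteq> dual_code n C"
    using f(1) by (intro vs.span_minimal subspace_dual_code) auto
  moreover have "\<forall>w\<in>f ` L. \<forall>x. x \<notin> (S - V) \<union> L \<longrightarrow> w x = 0"
  proof (intro ballI allI impI)
    fix w x assume "w \<in> f ` L" "x \<notin> (S - V) \<union> L"
    then obtain l where "l \<in> L" "w = f l" "x \<notin> insert l (S - V)"
      by blast
    then show "w x = 0"
      using f(3) by blast
  qed
  then have "code_supp (vs.span (f ` L)) \<subseteq> (S - V) \<union> L"
    by (rule code_supp_span_subset)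
  ultimately show ?thesis
    using that vs.subspace_span by blast
qed

text \<open>Passing to the codewords of E vanishing on one support coordinate loses that coordinate
  and at most one dimension.\<close>

lemma card_code_supp_ge:
  fixes D :: "(nat \<Rightarrow> 'a::field) set"
  assumes D: "D \<subseteq> words n" and wt: "\<forall>v\<in>D. v \<noteq> 0 \<longrightarrow> r + 1 \<le> card (wt_supp v)"
  shows "\<lbrakk>1 \<le> i; i \<le> vs.dim E; E \<subseteq> D; vs.subspace E; finite E\<rbrakk> \<Longrightarrow> r + i \<le> card (code_supp E)"
proof (induction i arbitrary: E)
  case 0
  then show ?case by simp
next
  case (Suc i)
  have "code_supp E \<subseteq> {..<n}"
    using Suc.prems(3) D by (intro code_supp_subset_words) blast
  then have fin: "finite (code_supp E)"
    by (rule finite_subset) simp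
  have "1 \<le> vs.dim E"
    using Suc.prems(2) by simp
  then obtain v where v: "v \<in> E" "v \<noteq> 0"
    by (rule ex_nonzero_if_dim_pos)
  then obtain l where l: "v l \<noteq> 0"
    by (auto simp: fun_eq_iff)
  have l_supp: "l \<in> code_supp E"
    using v l by (auto simp: code_supp_def wt_supp_def)
  show ?case
  proof (cases "i = 0")
    case True
    have "r + 1 \<le> card (wt_supp v)"
      using wt v Suc.prems(3) by blast
    also have "\<dots> \<le> card (code_supp E)"
      using v fin by (intro card_mono) (auto simp: code_supp_def)
    finally show ?thesis
      using True by simp
  next
    case False
    let ?E' = "{w\<in>E. w l = 0}"
    have "?E' = shortened E {l}"
      by (simp add: shortened_def)
    then have sub: "vs.subspace ?E'"
      using subspace_shortened[OF Suc.prems(4)] by simp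
    have "vs.dim E \<le> vs.dim ?E' + 1"
      using Suc.prems(4,5) by (intro dim_le_dim_coord_kernel)
    then have "r + i \<le> card (code_supp ?E')"
      using Suc.IH[of ?E'] False Suc.prems sub by auto
    also have "\<dots> \<le> card (code_supp E - {l})"
      using fin by (intro card_mono) (auto simp: code_supp_def wt_supp_def)
    also have "\<dots> = card (code_supp E) - 1"
      using l_supp fin by simp
    finally have "r + i \<le> card (code_supp E) - 1" .
    moreover have "card (code_supp E) \<noteq> 0"
      using l_supp fin by auto
    ultimately show ?thesis
      by linarith
  qed
qed

lemma ghw_eqI:
  fixes D :: "(nat \<Rightarrow> 'a::field) set"
  assumes D: "D \<subseteq> words n"
    and lower: "\<And>E. E \<subseteq> D \<Longrightarrow> vs.subspace E \<Longrightarrow> vs.dim E = i \<Longrightarrow> m \<le> card (code_supp E)"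
    and upper: "E0 \<subseteq> D" "vs.subspace E0" "vs.dim E0 = i" "card (code_supp E0) \<le> m"
  shows "ghw D i = m"
proof -
  let ?A = "{card (code_supp E) | E. E \<subseteq> D \<and> vs.subspace E \<and> vs.dim E = i}"
  have "?A \<subseteq> {..n}"
  proof
    fix x assume "x \<in> ?A"
    then obtain E where "x = card (code_supp E)" "E \<subseteq> D"
      by blast
    moreover have "code_supp E \<subseteq> {..<n}"
      using \<open>E \<subseteq> D\<close> D by (intro code_supp_subset_words) blast
    ultimately show "x \<in> {..n}"
      using card_mono[of "{..<n}" "code_supp E"] by simp
  qed
  then have "finite ?A"
    by (rule finite_subset) simp
  moreover have "card (code_supp E0) = m"
    using lower[OF upper(1-3)] upper(4) by simp
  then have "m \<in> ?A"
    using upper(1-3) by blast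
  moreover have "m \<le> x" if "x \<in> ?A" for x
    using that lower by blast
  ultimately have "Min ?A = m"
    by (intro Min_eqI)
  then show ?thesis
    by (simp add: ghw_def)
qed

lemma systematic_nonzero_info_coord:
  assumes "systematic k C" "0 \<in> C" "c \<in> C" "c \<noteq> 0"
  obtains j where "j < k" "c j \<noteq> 0"
proof -
  have "(0 :: nat \<Rightarrow> 'a) \<in> words k"
    by (simp add: words_def)
  then have "\<exists>!c'. c' \<in> C \<and> (\<forall>i<k. c' i = (0 :: nat \<Rightarrow> 'a) i)"
    using assms(1) unfolding systematic_def by blast
  then have "c = 0" if "\<forall>i<k. c i = 0"
    using assms(2,3) that by auto
  then show ?thesis
    using assms(4) that by blast
qed

lemma systematic_unit_codeword:
  assumes "systematic k C" "j < k"
  obtains c where "c \<in> C" "c j = 1"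
proof -
  have "unitv j \<in> words k"
    using assms(2) by (auto simp: words_def unitv_def)
  then obtain c where "c \<in> C" "\<forall>i<k. c i = unitv j i"
    using assms(1) unfolding systematic_def by blast
  then show ?thesis
    using that assms(2) by (auto simp: unitv_def)
qed

lemma puncture_min_dist_ge_vanish:
  assumes md: "min_dist_ge (puncture C S) \<delta>" and c: "c \<in> C"
    and V: "finite V" "card V < \<delta>" and vanish: "\<forall>l\<in>S - V. c l = 0"
  shows "\<forall>l\<in>S. c l = 0"
proof -
  define p where "p = (\<lambda>l. if l \<in> S then c l else 0)"
  have "p \<in> puncture C S"
    using c by (auto simp: puncture_def p_def)
  moreover have "wt_supp p \<subseteq> V"
    using vanish by (auto simp: wt_supp_def p_def)
  then have "card (wt_supp p) < \<delta>"
    using V card_mono le_less_trans by blast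
  ultimately have "p = 0"
    using md unfolding min_dist_ge_def by (auto simp: not_le[symmetric])
  then show ?thesis
    by (auto simp: p_def fun_eq_iff split: if_splits)
qed

lemma shortened_union_repair_group:
  assumes "\<And>c. c \<in> C \<Longrightarrow> \<forall>l\<in>S - V. c l = 0 \<Longrightarrow> \<forall>l\<in>S. c l = 0"
  shows "shortened C (Y \<union> (S - V)) = shortened C (Y \<union> S)"
  using assms by (auto simp: shortened_def)

lemma repair_group_card_diff_ge:
  assumes local: "\<And>c V. c \<in> C \<Longrightarrow> finite V \<Longrightarrow> card V < \<delta> \<Longrightarrow> \<forall>l\<in>S - V. c l = 0 \<Longrightarrow> \<forall>l\<in>S. c l = 0"
    and S: "finite S" and c: "c \<in> C" "j \<in> S" "c j \<noteq> 0" "\<forall>l\<in>X. c l = 0"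
  shows "\<delta> \<le> card (S - X)"
proof (rule ccontr)
  assume "\<not> \<delta> \<le> card (S - X)"
  moreover have "\<forall>l\<in>S - (S - X). c l = 0"
    using c(4) by auto
  ultimately have "\<forall>l\<in>S. c l = 0"
    using local[OF c(1), of "S - X"] S by simp
  then show False
    using c(2,3) by blast
qed

locale rdelta_code =
  fixes C :: "(nat \<Rightarrow> 'a::{finite,field}) set" and n k r \<delta> :: nat
  assumes rdelta_i_code: "rdelta_i_code n k r \<delta> C"
begin

lemma C_words: "C \<subseteq> words n"
  using rdelta_i_code by (simp add: rdelta_i_code_def lin_code_def)

lemma C_subspace: "vs.subspace C"
  using rdelta_i_code by (simp add: rdelta_i_code_def lin_code_def)

lemma finite_C: "finite C"
  using C_words finite_words by (rule finite_subset)

lemma dim_C: "vs.dim C = k"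
  using rdelta_i_code by (simp add: rdelta_i_code_def code_dim_def)

lemma systematic_C: "systematic k C"
  using rdelta_i_code by (simp add: rdelta_i_code_def)

lemma repair_group:
  assumes "j < k"
  obtains S where "S \<subseteq> {..<n}" "j \<in> S" "card S \<le> r + \<delta> - 1"
    "\<And>c V. c \<in> C \<Longrightarrow> finite V \<Longrightarrow> card V < \<delta> \<Longrightarrow> \<forall>l\<in>S - V. c l = 0 \<Longrightarrow> \<forall>l\<in>S. c l = 0"
proof -
  obtain S where S: "S \<subseteq> {..<n}" "j \<in> S" "card S \<le> r + \<delta> - 1"
    and md: "min_dist_ge (puncture C S) \<delta>"
    using rdelta_i_code assms by (auto simp: rdelta_i_code_def has_locality_def)
  show ?thesis
  proof (rule that[OF S])
    fix c V assume "c \<in> C" "finite V" "card V < \<delta>" "\<forall>l\<in>S - V. c l = 0"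
    then show "\<forall>l\<in>S. c l = 0"
      by (rule puncture_min_dist_ge_vanish[OF md])
  qed
qed

text \<open>Shortening on the repair group S of an information coordinate where the shortened code is
  nonzero: the at least \<delta> new coordinates of S cost at most |S - X| - (\<delta> - 1) dimensions, since
  vanishing outside \<delta> - 1 of them forces vanishing on all of S.\<close>

lemma shortening_step:
  assumes X: "X \<subseteq> {..<n}" and c: "c \<in> shortened C X" "c \<noteq> 0" and \<delta>: "1 \<le> \<delta>"
  obtains X' where "X' \<subseteq> {..<n}" "vs.dim (shortened C X) \<le> vs.dim (shortened C X') + r"
    "card X + vs.dim (shortened C X) + (\<delta> - 1) \<le> card X' + vs.dim (shortened C X')"
proof -
  have cC: "c \<in> C" and cX: "\<forall>l\<in>X. c l = 0"
    using c(1) by (auto simp: shortened_def)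
  obtain j where j: "j < k" "c j \<noteq> 0"
    using systematic_nonzero_info_coord[OF systematic_C vs.subspace_0[OF C_subspace] cC c(2)] .
  obtain S where S: "S \<subseteq> {..<n}" "j \<in> S" "card S \<le> r + \<delta> - 1"
    and local: "\<And>c V. c \<in> C \<Longrightarrow> finite V \<Longrightarrow> card V < \<delta> \<Longrightarrow> \<forall>l\<in>S - V. c l = 0 \<Longrightarrow> \<forall>l\<in>S. c l = 0"
    using repair_group[OF j(1)] by blast
  have finS: "finite S" and finX: "finite X"
    using S(1) X finite_subset by blast+
  define W where "W = S - X"
  have finW: "finite W"
    using finS by (simp add: W_def)
  have "\<delta> \<le> card W"
    unfolding W_def using local finS cC S(2) j(2) cX by (rule repair_group_card_diff_ge)
  then obtain V where V: "V \<subseteq> W" "card V = \<delta> - 1"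
    by (meson obtain_subset_with_card_n diff_le_self order_trans)
  have finV: "finite V"
    using V(1) finW finite_subset by blast
  have "X \<union> (W - V) = X \<union> (S - V)"
    by (auto simp: W_def)
  also have "shortened C \<dots> = shortened C (X \<union> S)"
    using local finV V(2) \<delta> by (intro shortened_union_repair_group) simp
  finally have shortened_S: "shortened C (X \<union> S) = shortened C (X \<union> (W - V))" ..
  have "vs.dim (shortened C X) \<le> vs.dim (shortened C (X \<union> (W - V))) + card (W - V)"
    using finite_C C_subspace finW by (intro dim_shortened_union_le) auto
  moreover have "card (W - V) = card W - (\<delta> - 1)"
    using V finV by (simp add: card_Diff_subset)
  ultimately have dim: "vs.dim (shortened C X) + (\<delta> - 1) \<le> vs.dim (shortened C (X \<union> S)) + card W"
    using shortened_S \<open>\<delta> \<le> card W\<close> by simp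
  have "X \<union> S = X \<union> W" "X \<inter> W = {}"
    by (auto simp: W_def)
  then have card: "card (X \<union> S) = card X + card W"
    using finX finW by (simp add: card_Un_disjoint)
  have "card W \<le> r + \<delta> - 1"
    using S(3) card_mono[OF finS, of W] by (auto simp: W_def)
  show ?thesis
  proof (rule that)
    show "X \<union> S \<subseteq> {..<n}"
      using X S(1) by blast
    show "vs.dim (shortened C X) \<le> vs.dim (shortened C (X \<union> S)) + r"
      using dim \<open>card W \<le> r + \<delta> - 1\<close> \<delta> by linarith
    show "card X + vs.dim (shortened C X) + (\<delta> - 1) \<le> card (X \<union> S) + vs.dim (shortened C (X \<union> S))"
      using dim card by linarith
  qed
qed

lemma iterated_shortening:
  assumes X0: "X0 \<subseteq> {..<n}" and \<delta>: "1 \<le> \<delta>"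
  shows "t * r < vs.dim (shortened C X0) \<Longrightarrow> \<exists>X. X \<subseteq> {..<n}
    \<and> vs.dim (shortened C X0) \<le> vs.dim (shortened C X) + t * r
    \<and> card X0 + vs.dim (shortened C X0) + t * (\<delta> - 1) \<le> card X + vs.dim (shortened C X)"
proof (induction t)
  case 0
  then show ?case
    using X0 by auto
next
  case (Suc t)
  then have "t * r < vs.dim (shortened C X0)"
    by simp
  then obtain X where X: "X \<subseteq> {..<n}" "vs.dim (shortened C X0) \<le> vs.dim (shortened C X) + t * r"
    "card X0 + vs.dim (shortened C X0) + t * (\<delta> - 1) \<le> card X + vs.dim (shortened C X)"
    using Suc.IH by blast
  then have "1 \<le> vs.dim (shortened C X)"
    using Suc.prems by simp
  then obtain c where "c \<in> shortened C X" "c \<noteq> 0"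
    by (rule ex_nonzero_if_dim_pos)
  then obtain X' where "X' \<subseteq> {..<n}" "vs.dim (shortened C X) \<le> vs.dim (shortened C X') + r"
    "card X + vs.dim (shortened C X) + (\<delta> - 1) \<le> card X' + vs.dim (shortened C X')"
    using shortening_step[OF X(1) _ _ \<delta>] by blast
  then show ?case
    using X by (intro exI[of _ X']) auto
qed

lemma dual_weight_gt:
  assumes \<delta>: "1 \<le> \<delta>" and kq: "k = q * r" "1 \<le> q"
    and singleton: "min_dist C + k + (q - 1) * (\<delta> - 1) = n + 1"
    and v: "v \<in> dual_code n C" "v \<noteq> 0"
  shows "r + 1 \<le> card (wt_supp v)"
proof (rule ccontr)
  assume "\<not> r + 1 \<le> card (wt_supp v)"
  then have T_le: "card (wt_supp v) \<le> r"
    by simp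
  let ?T = "wt_supp v"
  have T: "?T \<subseteq> {..<n}"
    using v(1) dual_code_subset_words by (intro wt_supp_subset_words) blast
  have k_r: "k = (q - 1) * r + r"
    using kq by (cases q) auto
  have dim_T: "k + 1 \<le> vs.dim (shortened C ?T) + card ?T"
    using dim_shortened_dual_support[OF finite_C C_subspace v] dim_C by simp
  then have "(q - 1) * r < vs.dim (shortened C ?T)"
    using T_le k_r by linarith
  then obtain X where X: "X \<subseteq> {..<n}"
    "vs.dim (shortened C ?T) \<le> vs.dim (shortened C X) + (q - 1) * r"
    "card ?T + vs.dim (shortened C ?T) + (q - 1) * (\<delta> - 1) \<le> card X + vs.dim (shortened C X)"
    using iterated_shortening[OF T \<delta>] by blast
  have "1 \<le> vs.dim (shortened C X)"
    using X(2) dim_T T_le k_r by linarith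
  then obtain c where c: "c \<in> C" "c \<noteq> 0"
    "card (wt_supp c) + card X + vs.dim (shortened C X) \<le> n + 1"
    using shortened_low_weight[OF C_words finite_C C_subspace X(1)] by blast
  have "min_dist C \<le> card (wt_supp c)"
    using finite_C c(1,2) by (rule min_dist_le)
  then show False
    using c(3) X(3) dim_T singleton by linarith
qed

lemma ghw_dual_le:
  assumes k: "1 \<le> k" and i: "1 \<le> i" "i \<le> \<delta> - 1"
  obtains E where "E \<subseteq> dual_code n C" "vs.subspace E" "vs.dim E = i" "card (code_supp E) \<le> r + i"
proof -
  obtain S where S: "S \<subseteq> {..<n}" "0 \<in> S" "card S \<le> r + \<delta> - 1"
    and local: "\<And>c V. c \<in> C \<Longrightarrow> finite V \<Longrightarrow> card V < \<delta> \<Longrightarrow> \<forall>l\<in>S - V. c l = 0 \<Longrightarrow> \<forall>l\<in>S. c l = 0"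
    using repair_group[of 0] k by auto
  have finS: "finite S"
    using S(1) finite_subset by blast
  obtain c where c: "c \<in> C" "c 0 = 1"
    using systematic_unit_codeword[OF systematic_C] k by auto
  have "\<delta> \<le> card (S - {})"
    by (rule repair_group_card_diff_ge[OF local finS c(1) S(2)]) (simp_all add: c(2))
  then have "\<delta> \<le> card S"
    by simp
  then obtain V where V: "V \<subseteq> S" "card V = \<delta> - 1"
    by (meson obtain_subset_with_card_n diff_le_self order_trans)
  then have finV: "finite V"
    using finS finite_subset by blast
  obtain L where L: "L \<subseteq> V" "card L = i"
    using i(2) V(2) obtain_subset_with_card_n[of i V] by auto
  have "card V < \<delta>"
    using V(2) i by simp
  then have "\<forall>x\<in>S. c x = 0" if "c \<in> C" "\<forall>x\<in>S - V. c x = 0" for c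
    using local[OF that(1) finV _ that(2)] by blast
  then obtain E where E: "E \<subseteq> dual_code n C" "vs.subspace E" "vs.dim E = card L"
    "code_supp E \<subseteq> (S - V) \<union> L"
    using dual_subcode_of_determined_coords[OF C_subspace S(1) L(1) V(1)] by blast
  have "card (code_supp E) \<le> card ((S - V) \<union> L)"
    using E(4) finS finV L(1) by (intro card_mono) (auto intro: finite_subset)
  also have "\<dots> \<le> card (S - V) + card L"
    by (rule card_Un_le)
  also have "\<dots> \<le> r + i"
    using card_Diff_subset[OF finV V(1)] V(2) L(2) S(3) by linarith
  finally show ?thesis
    using that E(1-3) L(2) by simp
qed

end

lemma optimal_bound_eq_nat:
  fixes d n k r q \<delta> :: nat
  assumes "k = q * r" "1 \<le> r" "1 \<le> q" "1 \<le> \<delta>"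
    and "int d = int n - int k + 1 - (\<lceil>real k / real r\<rceil> - 1) * (int \<delta> - 1)"
  shows "d + k + (q - 1) * (\<delta> - 1) = n + 1"
proof -
  have "real k / real r = real q"
    using assms(1,2) by simp
  then have "\<lceil>real k / real r\<rceil> = int q"
    by simp
  then have "int d = int n - int k + 1 - (int q - 1) * (int \<delta> - 1)"
    using assms(5) by simp
  moreover have "int ((q - 1) * (\<delta> - 1)) = (int q - 1) * (int \<delta> - 1)"
    using assms(3,4) by (simp add: of_nat_diff)
  ultimately show ?thesis
    by linarith
qed

theorem corollary2:
  fixes C :: "(nat \<Rightarrow> 'a::{finite,field}) set"
    and n k d r \<delta> :: nat
  assumes "rdelta_i_code n k r \<delta> C"
    and "1 \<le> k" and "k \<le> n" and "1 \<le> r"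
    and "min_dist C = d"
    and "r dvd k"
    and "d < r + 2 * \<delta> - 1"
    and "int d = int n - int k + 1 - (\<lceil>real k / real r\<rceil> - 1) * (int \<delta> - 1)"
  shows "\<forall>i. 1 \<le> i \<and> i \<le> \<delta> - 1 \<longrightarrow> ghw (dual_code n C) i = r + i"
proof (intro allI impI)
  fix i assume i: "1 \<le> i \<and> i \<le> \<delta> - 1"
  interpret rdelta_code C n k r \<delta>
    by (rule rdelta_code.intro) fact
  have \<delta>: "1 \<le> \<delta>"
    using i by linarith
  obtain q where kq: "k = q * r"
    using \<open>r dvd k\<close> by (metis dvd_def mult.commute)
  have q: "1 \<le> q"
    using kq \<open>1 \<le> k\<close> by (cases q) auto
  have "min_dist C + k + (q - 1) * (\<delta> - 1) = n + 1"
    using optimal_bound_eq_nat[OF kq \<open>1 \<le> r\<close> q \<delta>] assms(5,8) by simp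
  then have weight: "\<forall>v\<in>dual_code n C. v \<noteq> 0 \<longrightarrow> r + 1 \<le> card (wt_supp v)"
    using dual_weight_gt[OF \<delta> kq q] by blast
  obtain E0 where E0: "E0 \<subseteq> dual_code n C" "vs.subspace E0" "vs.dim E0 = i"
    "card (code_supp E0) \<le> r + i"
    using ghw_dual_le \<open>1 \<le> k\<close> i by blast
  show "ghw (dual_code n C) i = r + i"
  proof (rule ghw_eqI[OF dual_code_subset_words _ E0])
    fix E assume E: "E \<subseteq> dual_code n C" "vs.subspace E" "vs.dim E = i"
    moreover have "E \<subseteq> words n"
      using E(1) dual_code_subset_words by blast
    then have "finite E"
      using finite_words by (rule finite_subset)
    ultimately show "r + i \<le> card (code_supp E)"
      using card_code_supp_ge[OF dual_code_subset_words weight] i by simp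
  qed
qed

end
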